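(* Let $x_0\approx 4.113537611$ be the largest real root of $x^3-5x^2+15=0$, and define $$f(x):=\frac{\ln\left[-\frac{2(x^3-5x^2+15)}{x^2-3}\right]}{\ln\left[\frac{24(x^2-3)}{(x^2+3)^2}\right]}\qquad (3<x<x_0).$$ Let $x_1\approx 3.067873979\in(3,x_0)$ be the only root of $f'(x)=0$ in $(3,x_0)$, so that $f(x_1)\approx 5.977930729$. If $\lambda\le f(x_1)$, then for every triangle $$\sqrt{3}\,p\ \ge\ 10r-r\left(\frac{2r}{R}\right)^{\lambda}.$$ Equality holds if and only if $a:b:c=1:1:1$ (for any $\lambda\le f(x_1)$), or $\lambda=f(x_1)$ and $a:b:c=2(x_1^2-3):(x_1^2+3):(x_1^2+3)$.
   Context: For a triangle $ABC$, $a,b,c$ denote the side lengths, $p=\frac{a+b+c}{2}$ the semi-perimeter, $R$ the circumradius and $r$ the inradius. *)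

theory Defs
  imports Complex_Main
begin

definition is_triangle :: "real \<Rightarrow> real \<Rightarrow> real \<Rightarrow> bool" where
  "is_triangle a b c \<longleftrightarrow> a > 0 \<and> b > 0 \<and> c > 0 \<and> a < b + c \<and> b < a + c \<and> c < a + b"

definition semiperim :: "real \<Rightarrow> real \<Rightarrow> real \<Rightarrow> real" where
  "semiperim a b c = (a + b + c) / 2"

definition tri_area :: "real \<Rightarrow> real \<Rightarrow> real \<Rightarrow> real" where
  "tri_area a b c = (let p = semiperim a b c in sqrt (p * (p - a) * (p - b) * (p - c)))"

definition inradius :: "real \<Rightarrow> real \<Rightarrow> real \<Rightarrow> real" where
  "inradius a b c = tri_area a b c / semiperim a b c"

definition circumradius :: "real \<Rightarrow> real \<Rightarrow> real \<Rightarrow> real" where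
  "circumradius a b c = a * b * c / (4 * tri_area a b c)"

definition fpaper :: "real \<Rightarrow> real" where
  "fpaper x = ln (- (2 * (x^3 - 5 * x^2 + 15)) / (x^2 - 3)) / ln (24 * (x^2 - 3) / (x^2 + 3)^2)"

end

theory Submission
  imports Defs
begin

text \<open>
  Put \<open>s = \<surd>3 p / r\<close> and \<open>T = 2r/R \<in> (0,1]\<close>; the inequality reads \<open>10 - s \<le> T\<^sup>\<lambda>\<close>, and as
  \<open>T \<le> 1\<close> it suffices to treat \<open>\<lambda> = f(x\<^sub>1)\<close>. Write \<open>T = 24(x\<^sup>2 - 3)/(x\<^sup>2 + 3)\<^sup>2 = \<rho>(2 - \<rho>)\<close> with
  \<open>x \<ge> 3\<close> and \<open>\<rho> = 2(x\<^sup>2 - 3)/(x\<^sup>2 + 3) \<in> [1,2)\<close>. Blundon's inequality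
  \<open>abc(\<rho> + 2)\<^sup>3 \<le> \<rho>(a + b + c)\<^sup>3\<close>, which comes from the nonnegativity of
  \<open>(a - b)\<^sup>2(b - c)\<^sup>2(c - a)\<^sup>2\<close>, gives \<open>s \<ge> 2x\<^sup>3/(x\<^sup>2 - 3)\<close>, with equality only for the isosceles
  triangle \<open>2(x\<^sup>2 - 3) : x\<^sup>2 + 3 : x\<^sup>2 + 3\<close>. So \<open>10 - s\<close> is at most the numerator of \<open>f\<close>
  inside the logarithm, and that is at most \<open>T\<^bsup>f(x\<^sub>1)\<^esup>\<close> precisely because \<open>f(x) \<ge> f(x\<^sub>1)\<close>.
  That \<open>x\<^sub>1\<close> minimises \<open>f\<close> on \<open>(3, x\<^sub>0)\<close> follows from its being the only critical point
  together with three values of \<open>f\<close>, certified by rational bounds on \<open>ln\<close>.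
\<close>

lemma interior_extremum_imp_deriv_zero:
  fixes f :: "real \<Rightarrow> real"
  assumes "a < m" "m < b" "(f has_real_derivative D) (at m)"
    and "(\<forall>x\<in>{a..b}. f m \<le> f x) \<or> (\<forall>x\<in>{a..b}. f x \<le> f m)"
  shows "D = 0"
proof -
  have near: "\<bar>m - y\<bar> < min (m - a) (b - m) \<Longrightarrow> y \<in> {a..b}" for y
    by (auto simp: abs_less_iff)
  have d: "0 < min (m - a) (b - m)" using assms by auto
  from assms(4) show ?thesis
  proof
    assume "\<forall>x\<in>{a..b}. f m \<le> f x"
    with near show ?thesis by (intro DERIV_local_min[OF assms(3) d]) blast
  next
    assume "\<forall>x\<in>{a..b}. f x \<le> f m"
    with near show ?thesis by (intro DERIV_local_max[OF assms(3) d]) blast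
  qed
qed

lemma interior_extremum_eq_unique_critical_point:
  fixes f :: "real \<Rightarrow> real"
  assumes diff: "\<forall>y\<in>{l<..<u}. \<exists>D. (f has_real_derivative D) (at y)"
    and crit: "\<forall>y\<in>{l<..<u}. (f has_real_derivative 0) (at y) \<longrightarrow> y = c"
    and "l \<le> a" "a < m" "m < b" "b \<le> u"
    and "(\<forall>x\<in>{a..b}. f m \<le> f x) \<or> (\<forall>x\<in>{a..b}. f x \<le> f m)"
  shows "m = c"
proof -
  obtain D where D: "(f has_real_derivative D) (at m)" using diff assms(3-6) by force
  with interior_extremum_imp_deriv_zero[OF assms(4,5) D assms(7)] crit assms(3-6)
  show ?thesis by auto
qed

lemma continuous_attains_interior_max:
  fixes f :: "real \<Rightarrow> real"
  assumes "a \<le> c" "c \<le> b" "f a < f c" "f b < f c" "\<forall>x\<in>{a..b}. isCont f x"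
  shows "\<exists>m\<in>{a<..<b}. \<forall>x\<in>{a..b}. f x \<le> f m"
proof -
  obtain m where m: "a \<le> m" "m \<le> b" "\<forall>x. a \<le> x \<and> x \<le> b \<longrightarrow> f x \<le> f m"
    using isCont_eq_Ub[of a b f] assms by force
  have "f c \<le> f m" using m(3) assms(1,2) by blast
  hence "m \<noteq> a" "m \<noteq> b" using assms(3,4) by auto
  with m show ?thesis by (intro bexI[of _ m]) auto
qed

lemma continuous_attains_interior_min:
  fixes f :: "real \<Rightarrow> real"
  assumes "a \<le> c" "c \<le> b" "f c < f a" "f c < f b" "\<forall>x\<in>{a..b}. isCont f x"
  shows "\<exists>m\<in>{a<..<b}. \<forall>x\<in>{a..b}. f m \<le> f x"
  using continuous_attains_interior_max[of a c b "\<lambda>x. - f x"] assms by auto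

lemma unique_critical_point_min_on_dip:
  fixes f :: "real \<Rightarrow> real"
  assumes diff: "\<forall>y\<in>{l<..<u}. \<exists>D. (f has_real_derivative D) (at y)"
    and crit: "\<forall>y\<in>{l<..<u}. (f has_real_derivative 0) (at y) \<longrightarrow> y = c"
    and pts: "l < p" "p < q" "q < r" "r < u"
    and dip: "f q < f p" "f q < f r"
  shows "p < c" "c < r" "\<forall>x\<in>{p..r}. f c \<le> f x"
proof -
  have "\<forall>x\<in>{p..r}. isCont f x" using diff pts by (force intro: DERIV_isCont)
  then obtain m where m: "m \<in> {p<..<r}" "\<forall>x\<in>{p..r}. f m \<le> f x"
    using continuous_attains_interior_min[of p q r f] dip pts by fastforce
  moreover from m have "m = c"
    using interior_extremum_eq_unique_critical_point[OF diff crit, of p m r] pts by auto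
  ultimately show "p < c" "c < r" "\<forall>x\<in>{p..r}. f c \<le> f x" by auto
qed

lemma unique_critical_point_imp_strict_min:
  fixes f :: "real \<Rightarrow> real"
  assumes diff: "\<forall>y\<in>{l<..<u}. \<exists>D. (f has_real_derivative D) (at y)"
    and crit: "\<forall>y\<in>{l<..<u}. (f has_real_derivative 0) (at y) \<longrightarrow> y = c"
    and pts: "l < p" "p < q" "q < r" "r < u"
    and dip: "f q < f p" "f q < f r"
  shows "\<forall>y\<in>{l<..<u}. y \<noteq> c \<longrightarrow> f c < f y"
proof (intro ballI impI)
  note c = unique_critical_point_min_on_dip[OF diff crit pts dip]
  note extremum_eq_c = interior_extremum_eq_unique_critical_point[OF diff crit]
  have cont: "\<forall>x\<in>{a..b}. isCont f x" if "l < a" "b < u" for a b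
    using diff that by (force intro: DERIV_isCont)
  have "f c \<le> f q" using c(3) pts by auto
  hence c_lt: "f c < f p" "f c < f r" using dip by auto
  fix y assume y: "y \<in> {l<..<u}" "y \<noteq> c"
  show "f c < f y"
  proof (rule ccontr)
    assume "\<not> f c < f y"
    with c_lt have le: "f y \<le> f c" "f y < f p" "f y < f r" by auto
    consider "y < p" | "p < y" "y < r" | "r < y" using le(2,3) by fastforce
    then show False
    proof cases
      case 1
      \<comment> \<open>then \<open>f\<close> has an interior maximum on \<open>[y, c]\<close>, a second critical point\<close>
      obtain n where "n \<in> {y<..<c}" "\<forall>x\<in>{y..c}. f x \<le> f n"
        using continuous_attains_interior_max[OF _ _ _ _ cont[of y c], of p] 1 le c c_lt y pts
        by fastforce
      with extremum_eq_c[of y n c] y pts c show False by auto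
    next
      case 2
      have "\<forall>x\<in>{p..r}. f y \<le> f x" using c(3) le(1) by fastforce
      with extremum_eq_c[of p y r] 2 y pts show False by auto
    next
      case 3
      obtain n where "n \<in> {c<..<y}" "\<forall>x\<in>{c..y}. f x \<le> f n"
        using continuous_attains_interior_max[OF _ _ _ _ cont[of c y], of r] 3 le c c_lt y pts
        by fastforce
      with extremum_eq_c[of c n y] y pts c show False by auto
    qed
  qed
qed

lemma ln_le_2_diff_div_sum:
  fixes u :: real assumes "0 < u" "u \<le> 1"
  shows "ln u \<le> 2 * (u - 1) / (u + 1)"
proof -
  let ?g = "\<lambda>v. ln v - 2 * (v - 1) / (v + 1)"
  have "?g u \<le> ?g 1"
  proof (rule DERIV_nonneg_imp_nondecreasing[OF assms(2)])
    fix x assume "u \<le> x" "x \<le> 1"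
    hence x: "x > 0" using assms by auto
    have "(?g has_real_derivative 1 / x - 4 / (x + 1)^2) (at x)"
      using x by (auto intro!: derivative_eq_intros simp: field_simps power2_eq_square)
    moreover have "1 / x - 4 / (x + 1)^2 = (x - 1)^2 / (x * (x + 1)^2)"
      using x by (simp add: field_simps) (simp add: power2_eq_square algebra_simps)
    ultimately show "\<exists>y. (?g has_real_derivative y) (at x) \<and> 0 \<le> y"
      using x by auto
  qed
  thus ?thesis by simp
qed

lemma ln_ge_half_diff_inverse:
  fixes u :: real assumes "0 < u" "u \<le> 1"
  shows "(u - 1 / u) / 2 \<le> ln u"
proof -
  let ?g = "\<lambda>v. (v - 1 / v) / 2 - ln v"
  have "?g u \<le> ?g 1"
  proof (rule DERIV_nonneg_imp_nondecreasing[OF assms(2)])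
    fix x assume "u \<le> x" "x \<le> 1"
    hence x: "x > 0" using assms by auto
    have "(?g has_real_derivative (1 + 1 / x^2) / 2 - 1 / x) (at x)"
      using x by (auto intro!: derivative_eq_intros simp: field_simps power2_eq_square)
    moreover have "(1 + 1 / x^2) / 2 - 1 / x = (x - 1)^2 / (2 * x^2)"
      using x by (simp add: field_simps power2_eq_square)
    ultimately show "\<exists>y. (?g has_real_derivative y) (at x) \<and> 0 \<le> y"
      using x by auto
  qed
  thus ?thesis by simp
qed

lemma ln_ratio_gt:
  fixes A B c :: real
  assumes "0 < A" "A \<le> 1" "0 < B" "B < 1" "0 < c"
    and "2 * (A - 1) / (A + 1) < c * ((B - 1 / B) / 2)"
  shows "c < ln A / ln B"
proof -
  have "ln A < c * ln B"
    using ln_le_2_diff_div_sum[OF assms(1,2)] ln_ge_half_diff_inverse[of B] assms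
      mult_left_mono[of "(B - 1 / B) / 2" "ln B" c] by linarith
  thus ?thesis using assms(3,4) by (simp add: neg_less_divide_eq mult.commute)
qed

lemma ln_ratio_lt:
  fixes A B c :: real
  assumes "0 < A" "A \<le> 1" "0 < B" "B < 1" "0 < c"
    and "c * (2 * (B - 1) / (B + 1)) < (A - 1 / A) / 2"
  shows "ln A / ln B < c"
proof -
  have "c * ln B < ln A"
    using ln_ge_half_diff_inverse[OF assms(1,2)] ln_le_2_diff_div_sum[of B] assms
      mult_left_mono[of "ln B" "2 * (B - 1) / (B + 1)" c] by linarith
  thus ?thesis using assms(3,4) by (simp add: neg_divide_less_eq mult.commute)
qed

lemma le_powr_iff_le_ln_ratio:
  fixes A B F :: real
  assumes "0 < A" "0 < B" "B < 1"
  shows "A \<le> B powr F \<longleftrightarrow> F \<le> ln A / ln B"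
proof -
  have "A \<le> B powr F \<longleftrightarrow> ln A \<le> ln (B powr F)"
    using assms by (simp del: ln_powr)
  also have "\<dots> \<longleftrightarrow> ln A \<le> F * ln B"
    by simp
  also have "\<dots> \<longleftrightarrow> F \<le> ln A / ln B"
    using assms by (simp add: neg_le_divide_eq mult.commute)
  finally show ?thesis .
qed

lemma eq_powr_iff_eq_ln_ratio:
  fixes A B F :: real
  assumes "0 < A" "0 < B" "B < 1"
  shows "A = B powr F \<longleftrightarrow> F = ln A / ln B"
proof -
  have "A = B powr F \<longleftrightarrow> ln A = ln (B powr F)"
    using assms by (simp del: ln_powr)
  also have "\<dots> \<longleftrightarrow> ln A = F * ln B"
    by simp
  also have "\<dots> \<longleftrightarrow> F = ln A / ln B"
    using assms by (auto simp: field_simps)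
  finally show ?thesis .
qed

text \<open>For the isosceles triangle \<open>2(x\<^sup>2 - 3) : x\<^sup>2 + 3 : x\<^sup>2 + 3\<close>, \<open>f_den x = 2r/R\<close> and
  \<open>f_num x = 10 - \<surd>3 p/r\<close> (see \<open>isosceles_shape_ratios\<close>).\<close>

definition f_num :: "real \<Rightarrow> real" where
  "f_num x = - (2 * (x^3 - 5 * x^2 + 15)) / (x^2 - 3)"

definition f_den :: "real \<Rightarrow> real" where
  "f_den x = 24 * (x^2 - 3) / (x^2 + 3)^2"

lemma fpaper_eq_ln_ratio: "fpaper x = ln (f_num x) / ln (f_den x)"
  unfolding fpaper_def f_num_def f_den_def ..

lemma f_num_eq:
  assumes "x^2 \<noteq> 3" shows "f_num x = 10 - 2 * x^3 / (x^2 - 3)"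
  using assms unfolding f_num_def by (simp add: field_simps)

lemma f_den_bounds:
  fixes x :: real assumes "3 < x"
  shows "0 < f_den x" "f_den x < 1"
proof -
  have "9 < x^2" using power_strict_mono[of 3 x 2] assms by simp
  moreover have "(x^2 + 3)^2 - 24 * (x^2 - 3) = (x^2 - 9)^2" by algebra
  ultimately have "24 * (x^2 - 3) < (x^2 + 3)^2" "0 < x^2 - 3"
    by (smt (verit) zero_less_power2)+
  thus "0 < f_den x" "f_den x < 1" unfolding f_den_def by simp_all
qed

lemma cubic_neg_iff_below_root:
  fixes x0 y :: real
  assumes root: "x0^3 - 5 * x0^2 + 15 = 0" and "4 \<le> x0" "3 \<le> y"
  shows "y^3 - 5 * y^2 + 15 < 0 \<longleftrightarrow> y < x0"
proof -
  define q where "q = y^2 + x0 * y + x0^2 - 5 * y - 5 * x0"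
  have factor: "y^3 - 5 * y^2 + 15 = (y - x0) * q"
    using root unfolding q_def by algebra
  have "q = 2 + 5 * (y - 3) + (y - 3)^2 + 6 * (x0 - 4) + (y - 3) * (x0 - 4) + (x0 - 4)^2"
    unfolding q_def by algebra
  moreover have "0 \<le> (y - 3) * (x0 - 4)" using assms by simp
  ultimately have "0 < q"
    using assms(2,3) zero_le_power2[of "y - 3"] zero_le_power2[of "x0 - 4"] by (smt (verit))
  with factor show ?thesis by (simp add: mult_less_0_iff)
qed

lemma largest_cubic_root_gt_4:
  fixes x0 :: real
  assumes "\<forall>y::real. y^3 - 5 * y^2 + 15 = 0 \<longrightarrow> y \<le> x0"
  shows "4 < x0"
proof -
  have "\<exists>x. 41/10 \<le> x \<and> x \<le> 103/25 \<and> (\<lambda>y::real. y^3 - 5 * y^2 + 15) x = 0"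
    by (rule IVT) (auto simp: power2_eq_square power3_eq_cube intro!: continuous_intros)
  with assms show ?thesis by force
qed

lemma f_num_pos:
  fixes x0 x :: real
  assumes root: "x0^3 - 5 * x0^2 + 15 = 0" and "4 < x0" "3 < x" "x < x0"
  shows "0 < f_num x"
proof -
  have "9 < x^2" using power_strict_mono[of 3 x 2] assms by simp
  moreover have "x^3 - 5 * x^2 + 15 < 0" using cubic_neg_iff_below_root[OF root] assms by simp
  ultimately show ?thesis unfolding f_num_def by (simp add: divide_pos_pos)
qed

lemma fpaper_differentiable:
  fixes x0 y :: real
  assumes root: "x0^3 - 5 * x0^2 + 15 = 0" and "4 < x0" "3 < y" "y < x0"
  shows "\<exists>D. (fpaper has_real_derivative D) (at y)"
proof -
  have "0 < y^2 + 3" by (simp add: add_nonneg_pos)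
  hence "0 < f_num y" "0 < f_den y" "ln (f_den y) \<noteq> 0" "(y^2 + 3)^2 \<noteq> 0"
    using f_num_pos[OF root] f_den_bounds[of y] assms by auto
  thus ?thesis
    unfolding fpaper_def f_num_def f_den_def by (intro exI derivative_eq_intros refl) auto
qed

text \<open>The sample points bracket \<open>x\<^sub>1 \<approx> 3.0679\<close>, and \<open>299/50\<close> separates the values.\<close>

lemma fpaper_at_301_100: "299/50 < fpaper (301/100)"
  unfolding fpaper_def by (rule ln_ratio_gt) (simp_all add: power2_eq_square power3_eq_cube)

lemma fpaper_at_31_10: "299/50 < fpaper (31/10)"
  unfolding fpaper_def by (rule ln_ratio_gt) (simp_all add: power2_eq_square power3_eq_cube)

lemma fpaper_at_767_250: "fpaper (767/250) < 299/50"
  unfolding fpaper_def by (rule ln_ratio_lt) (simp_all add: power2_eq_square power3_eq_cube)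

lemma fpaper_strict_min:
  fixes x0 x1 :: real
  assumes root: "x0^3 - 5 * x0^2 + 15 = 0" and "4 < x0" "x1 \<in> {3<..<x0}"
    and crit: "\<forall>y\<in>{3<..<x0}. (fpaper has_real_derivative 0) (at y) \<longrightarrow> y = x1"
  shows "\<forall>y\<in>{3<..<x0}. y \<noteq> x1 \<longrightarrow> fpaper x1 < fpaper y"
proof (rule unique_critical_point_imp_strict_min[OF _ crit])
  show "\<forall>y\<in>{3<..<x0}. \<exists>D. (fpaper has_real_derivative D) (at y)"
    using fpaper_differentiable[OF root \<open>4 < x0\<close>] by auto
  show "fpaper (767/250) < fpaper (301/100)" "fpaper (767/250) < fpaper (31/10)"
    using fpaper_at_301_100 fpaper_at_31_10 fpaper_at_767_250 by linarith+
qed (use \<open>4 < x0\<close> in auto)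

lemma
  fixes a b c :: real
  assumes "is_triangle a b c"
  shows inradius_pos: "0 < inradius a b c"
    and two_inradius_div_circumradius:
      "2 * inradius a b c / circumradius a b c = (b + c - a) * (c + a - b) * (a + b - c) / (a * b * c)"
    and sqrt3_semiperim_div_inradius:
      "sqrt 3 * semiperim a b c / inradius a b c
         = sqrt (3 * (a + b + c)^3 / ((b + c - a) * (c + a - b) * (a + b - c)))"
proof -
  define p where "p = semiperim a b c"
  define H where "H = (b + c - a) * (c + a - b) * (a + b - c)"
  have pos: "0 < a" "0 < b" "0 < c" "0 < H" "0 < p"
    using assms unfolding is_triangle_def H_def p_def semiperim_def by auto
  have area: "tri_area a b c = sqrt (p * H / 8)"
    unfolding tri_area_def p_def[symmetric] Let_def H_def p_def semiperim_def
    by (simp add: field_simps)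
  have S: "0 < sqrt (p * H / 8)" "sqrt (p * H / 8)^2 = p * H / 8" using pos by auto
  show "0 < inradius a b c"
    unfolding inradius_def area p_def[symmetric] using S pos by simp
  have "2 * inradius a b c / circumradius a b c = 8 * sqrt (p * H / 8)^2 / (p * (a * b * c))"
    unfolding inradius_def circumradius_def area p_def[symmetric] using S pos
    by (simp add: field_simps power2_eq_square)
  also have "\<dots> = H / (a * b * c)" unfolding S(2) using pos by simp
  finally show "2 * inradius a b c / circumradius a b c = (b + c - a) * (c + a - b) * (a + b - c) / (a * b * c)"
    unfolding H_def .
  have "sqrt 3 * semiperim a b c / inradius a b c = sqrt 3 * p^2 / sqrt (p * H / 8)"
    unfolding inradius_def area p_def[symmetric] using S pos by (simp add: power2_eq_square)
  also have "\<dots> = sqrt (3 * p^4) / sqrt (p * H / 8)"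
    using pos by (simp add: real_sqrt_mult numeral_eq_Suc)
  also have "\<dots> = sqrt (3 * p^4 / (p * H / 8))"
    by (rule real_sqrt_divide[symmetric])
  also have "3 * p^4 / (p * H / 8) = 24 * p^3 / H"
    using pos by (simp add: field_simps eval_nat_numeral)
  also have "\<dots> = 3 * (a + b + c)^3 / H"
    unfolding p_def semiperim_def by (simp add: power_divide)
  finally show "sqrt 3 * semiperim a b c / inradius a b c
         = sqrt (3 * (a + b + c)^3 / ((b + c - a) * (c + a - b) * (a + b - c)))"
    unfolding H_def .
qed

lemma triangle_defect_le_product:
  fixes a b c :: real
  assumes "0 < a" "0 < b" "0 < c" "0 < b + c - a" "0 < c + a - b" "0 < a + b - c"
  shows "(b + c - a) * (c + a - b) * (a + b - c) \<le> a * b * c"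
proof -
  define u v w where "u = b + c - a" "v = c + a - b" "w = a + b - c"
  have "c^2 - u * v = (a - b)^2" "a^2 - v * w = (b - c)^2" "b^2 - w * u = (c - a)^2"
    unfolding u_v_w_def by algebra+
  hence "u * v \<le> c^2" "v * w \<le> a^2" "w * u \<le> b^2"
    by (smt (verit) zero_le_power2)+
  hence "(u * v) * (v * w) * (w * u) \<le> c^2 * a^2 * b^2"
    using assms(4-6) unfolding u_v_w_def by (intro mult_mono) auto
  hence "(u * v * w)^2 \<le> (a * b * c)^2" by (simp add: power2_eq_square mult_ac)
  hence "u * v * w \<le> a * b * c" by (rule power2_le_imp_le) (use assms in simp)
  thus ?thesis unfolding u_v_w_def .
qed

lemma two_inradius_div_circumradius_bounds:
  assumes tri: "is_triangle a b c"
  shows "0 < 2 * inradius a b c / circumradius a b c" "2 * inradius a b c / circumradius a b c \<le> 1"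
proof -
  have pos: "0 < a" "0 < b" "0 < c" "0 < b + c - a" "0 < c + a - b" "0 < a + b - c"
    using tri unfolding is_triangle_def by auto
  show "0 < 2 * inradius a b c / circumradius a b c"
    unfolding two_inradius_div_circumradius[OF tri] using pos by simp
  show "2 * inradius a b c / circumradius a b c \<le> 1"
    unfolding two_inradius_div_circumradius[OF tri]
    using triangle_defect_le_product[OF pos] pos by simp
qed

lemma blundon_identity:
  fixes a b c \<rho> :: real
  assumes "(b + c - a) * (c + a - b) * (a + b - c) = \<rho> * (2 - \<rho>) * (a * b * c)"
  shows "16 * (a + b + c)^3 * ((a - b)^2 * (b - c)^2 * (c - a)^2)
     = - (a * b * c) * (((a * b * c) * (\<rho> + 2)^3 - \<rho> * (a + b + c)^3)
                      * ((a * b * c) * (4 - \<rho>)^3 - (2 - \<rho>) * (a + b + c)^3))"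
proof -
  \<comment> \<open>the left side is the discriminant of the cubic with roots \<open>a, b, c\<close>; the hypothesis
      eliminates \<open>e2\<close> from it\<close>
  define e1 e2 e3 where "e1 = a + b + c" "e2 = a * b + b * c + c * a" "e3 = a * b * c"
  have discr: "(a - b)^2 * (b - c)^2 * (c - a)^2
      = e1^2 * e2^2 - 4 * e2^3 - 4 * e1^3 * e3 + 18 * e1 * e2 * e3 - 27 * e3^2"
    unfolding e1_e2_e3_def by algebra
  have e2: "4 * e1 * e2 = e1^3 + (8 + 2 * \<rho> - \<rho>^2) * e3"
    using assms unfolding e1_e2_e3_def by algebra
  have "64 * e1^3 * ((a - b)^2 * (b - c)^2 * (c - a)^2)
      = 4 * e1^3 * (4 * e1 * e2)^2 - 4 * (4 * e1 * e2)^3 - 256 * e1^6 * e3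
        + 288 * e1^3 * e3 * (4 * e1 * e2) - 1728 * e1^3 * e3^2"
    unfolding discr by algebra
  also have "\<dots> = - 4 * e3 * ((e3 * (\<rho> + 2)^3 - \<rho> * e1^3) * (e3 * (4 - \<rho>)^3 - (2 - \<rho>) * e1^3))"
    unfolding e2 by algebra
  finally show ?thesis unfolding e1_e2_e3_def by (simp add: mult_ac)
qed

lemma blundon_inequality:
  fixes a b c \<rho> :: real
  assumes pos: "0 < a" "0 < b" "0 < c" and \<rho>: "1 \<le> \<rho>" "\<rho> < 2"
    and defect: "(b + c - a) * (c + a - b) * (a + b - c) = \<rho> * (2 - \<rho>) * (a * b * c)"
  shows "(a * b * c) * (\<rho> + 2)^3 \<le> \<rho> * (a + b + c)^3"
proof -
  define U V where "U = (a * b * c) * (\<rho> + 2)^3 - \<rho> * (a + b + c)^3"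
    and "V = (a * b * c) * (4 - \<rho>)^3 - (2 - \<rho>) * (a + b + c)^3"
  have "0 \<le> 16 * (a + b + c)^3 * ((a - b)^2 * (b - c)^2 * (c - a)^2)"
    using pos by simp
  hence "0 \<le> - (a * b * c) * (U * V)"
    unfolding blundon_identity[OF defect] U_def V_def .
  hence UV: "U * V \<le> 0" using pos by (simp add: mult_le_0_iff zero_less_mult_iff)
  \<comment> \<open>so \<open>U > 0\<close> would force \<open>V > 0\<close>\<close>
  have "V * (\<rho> + 2)^3 - U * (4 - \<rho>)^3 = 16 * (\<rho> - 1)^3 * (a + b + c)^3"
    unfolding U_def V_def by algebra
  moreover have "0 \<le> 16 * (\<rho> - 1)^3 * (a + b + c)^3" using \<rho> pos by simp
  ultimately have "0 < U \<Longrightarrow> 0 < V" using \<rho>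
    by (smt (verit) mult_pos_pos zero_less_mult_iff zero_less_power)
  with UV have "U \<le> 0" by (smt (verit) mult_pos_pos)
  thus ?thesis unfolding U_def V_def by simp
qed

lemma blundon_equality_imp_isosceles:
  fixes a b c \<rho> :: real
  assumes pos: "0 < a" "0 < b" "0 < c" and \<rho>: "1 \<le> \<rho>" "\<rho> < 2"
    and defect: "(b + c - a) * (c + a - b) * (a + b - c) = \<rho> * (2 - \<rho>) * (a * b * c)"
    and eq: "(a * b * c) * (\<rho> + 2)^3 = \<rho> * (a + b + c)^3"
  shows "(b = c \<and> a = \<rho> * b) \<or> (c = a \<and> b = \<rho> * c) \<or> (a = b \<and> c = \<rho> * a)"
proof -
  have apex: "x = \<rho> * y"
    if xy: "0 < x" "0 < y" "(y + y - x) * (y + x - y) * (x + y - y) = \<rho> * (2 - \<rho>) * (x * y * y)"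
      "(x * y * y) * (\<rho> + 2)^3 = \<rho> * (x + y + y)^3" for x y
  proof -
    have "x * ((x - \<rho> * y) * (x - (2 - \<rho>) * y)) = 0" using xy(3) by algebra
    hence "x = \<rho> * y \<or> x = (2 - \<rho>) * y" using xy by simp
    moreover have "y^3 * (16 * (\<rho> - 1)^3) = 0" if "x = (2 - \<rho>) * y"
      using xy(4) unfolding that by algebra
    ultimately show ?thesis using xy by fastforce
  qed
  have "16 * (a + b + c)^3 * ((a - b)^2 * (b - c)^2 * (c - a)^2) = 0"
    using blundon_identity[OF defect] eq by simp
  hence "a = b \<or> b = c \<or> c = a" using pos by simp
  thus ?thesis
  proof (elim disjE)
    assume "b = c"
    with apex[of a b] defect eq pos show ?thesis by (simp add: mult_ac)
  next
    assume "c = a"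
    with apex[of b c] defect eq pos show ?thesis by (simp add: algebra_simps)
  next
    assume "a = b"
    with apex[of c a] defect eq pos show ?thesis by (simp add: algebra_simps)
  qed
qed

definition isosceles_shape :: "real \<Rightarrow> real \<Rightarrow> real \<Rightarrow> real \<Rightarrow> bool" where
  "isosceles_shape x a b c \<longleftrightarrow>
     (\<exists>t>0. (a = t * (2 * (x^2 - 3)) \<and> b = t * (x^2 + 3) \<and> c = t * (x^2 + 3))
          \<or> (b = t * (2 * (x^2 - 3)) \<and> a = t * (x^2 + 3) \<and> c = t * (x^2 + 3))
          \<or> (c = t * (2 * (x^2 - 3)) \<and> a = t * (x^2 + 3) \<and> b = t * (x^2 + 3)))"

lemma f_den_surj:
  fixes T :: real assumes "0 < T" "T \<le> 1"
  shows "\<exists>x\<ge>3. f_den x = T"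
proof -
  define \<rho> where "\<rho> = 1 + sqrt (1 - T)"
  have \<rho>: "1 \<le> \<rho>" "\<rho> < 2" "\<rho> * (2 - \<rho>) = T"
    using assms unfolding \<rho>_def by (auto simp: algebra_simps power2_eq_square[symmetric])
  define x where "x = sqrt (3 * (2 + \<rho>) / (2 - \<rho>))"
  have "9 \<le> 3 * (2 + \<rho>) / (2 - \<rho>)" using \<rho> by (simp add: field_simps)
  hence x: "3 \<le> x" "x^2 = 3 * (2 + \<rho>) / (2 - \<rho>)"
    unfolding x_def using real_sqrt_le_mono[of 9] by auto
  have "f_den x = \<rho> * (2 - \<rho>)"
    unfolding f_den_def x(2) using \<rho>(1,2) by (simp add: field_simps power2_eq_square)
  with x \<rho> show ?thesis by auto
qed

lemma shape_parameter:
  fixes x \<rho> :: real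
  assumes "3 \<le> x" and \<rho>: "\<rho> = 2 * (x^2 - 3) / (x^2 + 3)"
  shows "1 \<le> \<rho>" "\<rho> < 2" "\<rho> * (2 - \<rho>) = f_den x"
    "3 * (\<rho> + 2)^3 / (\<rho>^2 * (2 - \<rho>)) = (2 * x^3 / (x^2 - 3))^2"
proof -
  have x2: "9 \<le> x^2" using power_mono[of 3 x 2] assms by simp
  show "1 \<le> \<rho>" "\<rho> < 2" unfolding \<rho> using x2 by (simp_all add: field_simps)
  show "\<rho> * (2 - \<rho>) = f_den x"
    unfolding \<rho> f_den_def using x2 by (simp add: field_simps power2_eq_square)
  show "3 * (\<rho> + 2)^3 / (\<rho>^2 * (2 - \<rho>)) = (2 * x^3 / (x^2 - 3))^2"
    unfolding \<rho> using x2 by (simp add: field_simps) algebra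
qed

lemma sqrt3_semiperim_div_inradius_ge:
  fixes x a b c :: real
  assumes tri: "is_triangle a b c" and "3 \<le> x"
    and shape: "2 * inradius a b c / circumradius a b c = f_den x"
  shows "2 * x^3 / (x^2 - 3) \<le> sqrt 3 * semiperim a b c / inradius a b c"
    and "sqrt 3 * semiperim a b c / inradius a b c = 2 * x^3 / (x^2 - 3) \<Longrightarrow> isosceles_shape x a b c"
proof -
  define \<rho> where "\<rho> = 2 * (x^2 - 3) / (x^2 + 3)"
  define e1 e3 H where "e1 = a + b + c" "e3 = a * b * c" "H = (b + c - a) * (c + a - b) * (a + b - c)"
  define S where "S = 2 * x^3 / (x^2 - 3)"
  note \<rho> = shape_parameter[OF \<open>3 \<le> x\<close> \<rho>_def]
  have pos: "0 < a" "0 < b" "0 < c" "0 < e3" "0 < S"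
    using tri \<open>3 \<le> x\<close> power_mono[of 3 x 2] unfolding is_triangle_def e1_e3_H_def S_def by auto
  have defect: "H = \<rho> * (2 - \<rho>) * e3"
    using shape two_inradius_div_circumradius[OF tri] pos unfolding \<rho>(3) e1_e3_H_def
    by (simp add: field_simps)
  have s: "sqrt 3 * semiperim a b c / inradius a b c = sqrt (3 * e1^3 / H)"
    unfolding sqrt3_semiperim_div_inradius[OF tri] e1_e3_H_def ..
  define d where "d = \<rho>^2 * (2 - \<rho>) * e3"
  have "0 < d" unfolding d_def using \<rho>(1,2) pos by simp
  have "S^2 = 3 * e3 * (\<rho> + 2)^3 / d"
    unfolding S_def \<rho>(4)[symmetric] d_def using pos by simp
  moreover have "3 * e1^3 / H = 3 * \<rho> * e1^3 / d"
    unfolding defect d_def using \<rho>(1) by (simp add: power2_eq_square)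
  ultimately have excess: "3 * e1^3 / H = S^2 + 3 * (\<rho> * e1^3 - e3 * (\<rho> + 2)^3) / d"
    by (simp add: diff_divide_distrib right_diff_distrib)
  have "e3 * (\<rho> + 2)^3 \<le> \<rho> * e1^3"
    using blundon_inequality[OF pos(1-3) \<rho>(1,2)] defect unfolding e1_e3_H_def by simp
  hence "S^2 \<le> 3 * e1^3 / H"
    unfolding excess using \<open>0 < d\<close> by simp
  thus "S \<le> sqrt 3 * semiperim a b c / inradius a b c"
    unfolding s using pos real_le_rsqrt by blast
  assume "sqrt 3 * semiperim a b c / inradius a b c = S"
  hence "3 * e1^3 / H = S^2"
    unfolding s using \<open>S^2 \<le> 3 * e1^3 / H\<close> pos by (metis real_sqrt_pow2 zero_le_power2 order_trans)
  hence "e3 * (\<rho> + 2)^3 = \<rho> * e1^3"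
    unfolding excess using \<open>0 < d\<close> by simp
  hence iso: "(b = c \<and> a = \<rho> * b) \<or> (c = a \<and> b = \<rho> * c) \<or> (a = b \<and> c = \<rho> * a)"
    using blundon_equality_imp_isosceles[OF pos(1-3) \<rho>(1,2)] defect unfolding e1_e3_H_def by simp
  have "0 < x^2 + 3" by (simp add: add_nonneg_pos)
  with iso pos show "isosceles_shape x a b c"
    unfolding isosceles_shape_def \<rho>_def
    by (elim disjE conjE; intro exI[of _ "b / (x^2 + 3)"] exI[of _ "a / (x^2 + 3)"])
       (auto simp: field_simps)
qed

lemma isosceles_shape_ratios:
  fixes x a b c :: real
  assumes tri: "is_triangle a b c" and "3 \<le> x" and shape: "isosceles_shape x a b c"
  shows "2 * inradius a b c / circumradius a b c = f_den x"
    and "sqrt 3 * semiperim a b c / inradius a b c = 2 * x^3 / (x^2 - 3)"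
proof -
  define k where "k = x^2"
  have k: "9 \<le> k" unfolding k_def using power_mono[of 3 x 2] assms by simp
  obtain t where "0 < t"
    and cases: "(a = t * (2 * (k - 3)) \<and> b = t * (k + 3) \<and> c = t * (k + 3))
       \<or> (b = t * (2 * (k - 3)) \<and> a = t * (k + 3) \<and> c = t * (k + 3))
       \<or> (c = t * (2 * (k - 3)) \<and> a = t * (k + 3) \<and> b = t * (k + 3))"
    using shape unfolding isosceles_shape_def k_def[symmetric] by blast
  have "(b + c - a) * (c + a - b) * (a + b - c) = 48 * t^3 * (k - 3)^2
      \<and> a * b * c = 2 * t^3 * (k - 3) * (k + 3)^2 \<and> a + b + c = 4 * t * k"
    using cases by (elim disjE conjE; intro conjI; algebra)
  hence sides: "(b + c - a) * (c + a - b) * (a + b - c) = 48 * t^3 * (k - 3)^2"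
      "a * b * c = 2 * t^3 * (k - 3) * (k + 3)^2" "a + b + c = 4 * t * k"
    by auto
  have nz: "t \<noteq> 0" "k - 3 \<noteq> 0" "k + 3 \<noteq> 0" using \<open>0 < t\<close> k by auto
  show "2 * inradius a b c / circumradius a b c = f_den x"
    unfolding two_inradius_div_circumradius[OF tri] sides f_den_def k_def[symmetric]
    using nz by (simp add: field_simps) algebra
  have "(2 * x^3 / (x^2 - 3))^2 = 4 * k^3 / (k - 3)^2"
    unfolding k_def by (simp add: power_divide power_mult_distrib flip: power_mult)
  hence "3 * (a + b + c)^3 / ((b + c - a) * (c + a - b) * (a + b - c)) = (2 * x^3 / (x^2 - 3))^2"
    unfolding sides using nz by (simp add: field_simps)
  moreover have "0 < 2 * x^3 / (x^2 - 3)" using k assms(2) unfolding k_def by simp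
  ultimately show "sqrt 3 * semiperim a b c / inradius a b c = 2 * x^3 / (x^2 - 3)"
    unfolding sqrt3_semiperim_div_inradius[OF tri] by (metis real_sqrt_abs abs_of_pos)
qed

lemma isosceles_shape_3_imp_equilateral:
  assumes "isosceles_shape 3 a b c" shows "a = b \<and> b = c"
  using assms unfolding isosceles_shape_def by auto

lemma f_num_le_f_den_powr_fpaper_min:
  fixes x0 x1 x :: real
  assumes root: "x0^3 - 5 * x0^2 + 15 = 0" and "4 < x0"
    and min: "\<forall>y\<in>{3<..<x0}. y \<noteq> x1 \<longrightarrow> fpaper x1 < fpaper y"
    and "3 \<le> x"
  shows "10 - 2 * x^3 / (x^2 - 3) \<le> f_den x powr fpaper x1"
    and "10 - 2 * x^3 / (x^2 - 3) = f_den x powr fpaper x1 \<Longrightarrow> x = 3 \<or> x = x1"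
proof -
  have x2: "9 \<le> x^2" using power_mono[of 3 x 2] assms by simp
  have num: "10 - 2 * x^3 / (x^2 - 3) = f_num x" using f_num_eq[of x] x2 by simp
  consider "f_num x \<le> 0" | "x = 3" | "0 < f_num x" "3 < x" using \<open>3 \<le> x\<close> by fastforce
  hence "f_num x \<le> f_den x powr fpaper x1
      \<and> (f_num x = f_den x powr fpaper x1 \<longrightarrow> x = 3 \<or> x = x1)"
  proof cases
    case 1
    moreover have "0 < f_den x powr fpaper x1"
      using f_den_bounds[of x] \<open>3 \<le> x\<close> by (cases "x = 3") (auto simp: f_den_def)
    ultimately have "f_num x < f_den x powr fpaper x1" by linarith
    then show ?thesis by auto
  next
    case 2
    then show ?thesis by (simp add: f_num_def f_den_def)
  next
    case 3
    have "x^3 - 5 * x^2 + 15 < 0"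
      using \<open>0 < f_num x\<close> x2 unfolding f_num_def by (simp add: zero_less_divide_iff)
    hence "x < x0" using cubic_neg_iff_below_root[OF root] \<open>4 < x0\<close> \<open>3 \<le> x\<close> by simp
    note den = f_den_bounds[OF \<open>3 < x\<close>]
    have "fpaper x1 \<le> fpaper x" using min \<open>3 < x\<close> \<open>x < x0\<close> by fastforce
    moreover have "fpaper x1 = fpaper x \<Longrightarrow> x = x1" using min \<open>3 < x\<close> \<open>x < x0\<close> by fastforce
    ultimately show ?thesis
      unfolding le_powr_iff_le_ln_ratio[OF \<open>0 < f_num x\<close> den]
        eq_powr_iff_eq_ln_ratio[OF \<open>0 < f_num x\<close> den] fpaper_eq_ln_ratio[symmetric]
      by auto
  qed
  thus "10 - 2 * x^3 / (x^2 - 3) \<le> f_den x powr fpaper x1"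
    and "10 - 2 * x^3 / (x^2 - 3) = f_den x powr fpaper x1 \<Longrightarrow> x = 3 \<or> x = x1"
    unfolding num by auto
qed

lemma triangle_gap_le_powr_fpaper_min:
  fixes x0 x1 a b c :: real
  assumes root: "x0^3 - 5 * x0^2 + 15 = 0" and "4 < x0" and "3 < x1"
    and min: "\<forall>y\<in>{3<..<x0}. y \<noteq> x1 \<longrightarrow> fpaper x1 < fpaper y"
    and tri: "is_triangle a b c"
  defines "s \<equiv> sqrt 3 * semiperim a b c / inradius a b c"
    and "T \<equiv> 2 * inradius a b c / circumradius a b c"
  shows "10 - s \<le> T powr fpaper x1"
    and "10 - s = T powr fpaper x1 \<Longrightarrow> (a = b \<and> b = c) \<or> isosceles_shape x1 a b c"
proof -
  obtain x where "3 \<le> x" and x: "f_den x = T"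
    using f_den_surj two_inradius_div_circumradius_bounds[OF tri] unfolding T_def by blast
  note s_ge = sqrt3_semiperim_div_inradius_ge[OF tri \<open>3 \<le> x\<close>, folded s_def T_def, OF x[symmetric]]
  note bound = f_num_le_f_den_powr_fpaper_min[OF root \<open>4 < x0\<close> min \<open>3 \<le> x\<close>, unfolded x]
  show "10 - s \<le> T powr fpaper x1" using s_ge(1) bound(1) by linarith
  assume "10 - s = T powr fpaper x1"
  with s_ge(1) bound(1) have "s = 2 * x^3 / (x^2 - 3)" by linarith
  moreover from this have "x = 3 \<or> x = x1" using bound(2) \<open>10 - s = T powr fpaper x1\<close> by simp
  ultimately show "(a = b \<and> b = c) \<or> isosceles_shape x1 a b c"
    using s_ge(2) isosceles_shape_3_imp_equilateral by blast
qed

lemma triangle_gap_le_powr: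
  fixes x0 x1 lam a b c :: real
  assumes root: "x0^3 - 5 * x0^2 + 15 = 0" and "4 < x0" and x1: "3 < x1" "x1 < x0"
    and min: "\<forall>y\<in>{3<..<x0}. y \<noteq> x1 \<longrightarrow> fpaper x1 < fpaper y"
    and lam: "lam \<le> fpaper x1"
    and tri: "is_triangle a b c"
  defines "s \<equiv> sqrt 3 * semiperim a b c / inradius a b c"
    and "T \<equiv> 2 * inradius a b c / circumradius a b c"
  shows "10 - s \<le> T powr lam"
    and "10 - s = T powr lam \<longleftrightarrow> (a = b \<and> b = c) \<or> (lam = fpaper x1 \<and> isosceles_shape x1 a b c)"
proof -
  note gap = triangle_gap_le_powr_fpaper_min[OF root \<open>4 < x0\<close> x1(1) min tri, folded s_def T_def]
  have T: "0 < T" "T \<le> 1" using two_inradius_div_circumradius_bounds[OF tri] unfolding T_def by auto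
  have mono: "T powr fpaper x1 \<le> T powr lam" using powr_mono'[OF lam] T by simp
  with gap(1) show "10 - s \<le> T powr lam" by linarith
  have x1_ratios: "T = f_den x1" "s = 10 - f_num x1" if "isosceles_shape x1 a b c"
    using isosceles_shape_ratios[OF tri _ that] f_num_eq[of x1] x1 power_strict_mono[of 3 x1 2]
    unfolding s_def T_def by auto
  have x1_attains: "10 - s = T powr fpaper x1" if "isosceles_shape x1 a b c"
    using eq_powr_iff_eq_ln_ratio[OF f_num_pos[OF root \<open>4 < x0\<close> x1] f_den_bounds[OF x1(1)]]
    unfolding x1_ratios[OF that] fpaper_eq_ln_ratio by simp
  have equilateral_ratios: "T = 1" "s = 9" if "a = b \<and> b = c"
  proof -
    have "isosceles_shape 3 a b c"
      unfolding isosceles_shape_def using that tri by (intro exI[of _ "a / 12"]) (auto simp: is_triangle_def)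
    from isosceles_shape_ratios[OF tri _ this] show "T = 1" "s = 9"
      unfolding s_def T_def f_den_def by simp_all
  qed
  show "10 - s = T powr lam \<longleftrightarrow> (a = b \<and> b = c) \<or> (lam = fpaper x1 \<and> isosceles_shape x1 a b c)"
  proof
    assume eq: "10 - s = T powr lam"
    with gap(1) mono have "10 - s = T powr fpaper x1" "T powr fpaper x1 = T powr lam" by linarith+
    moreover have "lam = fpaper x1" if "T powr fpaper x1 = T powr lam" "isosceles_shape x1 a b c"
      using that powr_inj[of T] T f_den_bounds[OF x1(1)] x1_ratios by (metis less_irrefl)
    ultimately show "(a = b \<and> b = c) \<or> (lam = fpaper x1 \<and> isosceles_shape x1 a b c)"
      using gap(2) by blast
  next
    assume "(a = b \<and> b = c) \<or> (lam = fpaper x1 \<and> isosceles_shape x1 a b c)"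
    thus "10 - s = T powr lam" using equilateral_ratios x1_attains by auto
  qed
qed

theorem theorem1:
  fixes x0 x1 lam a b c :: real
  assumes x0_root: "x0^3 - 5 * x0^2 + 15 = 0"
    and x0_largest: "\<forall>y::real. y^3 - 5 * y^2 + 15 = 0 \<longrightarrow> y \<le> x0"
    and x1_in: "x1 \<in> {3<..<x0}"
    and x1_crit: "(fpaper has_real_derivative 0) (at x1)"
    and x1_unique: "\<forall>y\<in>{3<..<x0}. (fpaper has_real_derivative 0) (at y) \<longrightarrow> y = x1"
    and lam: "lam \<le> fpaper x1"
    and tri: "is_triangle a b c"
  shows "(sqrt 3 * semiperim a b c \<ge> 10 * inradius a b c
           - inradius a b c * (2 * inradius a b c / circumradius a b c) powr lam)
    \<and> ((sqrt 3 * semiperim a b c = 10 * inradius a b c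
           - inradius a b c * (2 * inradius a b c / circumradius a b c) powr lam)
         \<longleftrightarrow> (a = b \<and> b = c) \<or>
             (lam = fpaper x1 \<and>
               (\<exists>t>0. (a = t * (2 * (x1^2 - 3)) \<and> b = t * (x1^2 + 3) \<and> c = t * (x1^2 + 3))
                    \<or> (b = t * (2 * (x1^2 - 3)) \<and> a = t * (x1^2 + 3) \<and> c = t * (x1^2 + 3))
                    \<or> (c = t * (2 * (x1^2 - 3)) \<and> a = t * (x1^2 + 3) \<and> b = t * (x1^2 + 3)))))"
proof -
  have "4 < x0" by (rule largest_cubic_root_gt_4[OF x0_largest])
  have x1: "3 < x1" "x1 < x0" using x1_in by auto
  note min = fpaper_strict_min[OF x0_root \<open>4 < x0\<close> x1_in x1_unique]
  note main = triangle_gap_le_powr[OF x0_root \<open>4 < x0\<close> x1 min lam tri]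
  define r s u where "r = inradius a b c" and "s = sqrt 3 * semiperim a b c / r"
    and "u = (2 * r / circumradius a b c) powr lam"
  have "0 < r" unfolding r_def by (rule inradius_pos[OF tri])
  moreover have "sqrt 3 * semiperim a b c = r * s" "10 * r - r * u = r * (10 - u)"
    using \<open>0 < r\<close> unfolding s_def by (simp_all add: algebra_simps)
  ultimately have "10 * r - r * u \<le> sqrt 3 * semiperim a b c \<longleftrightarrow> 10 - s \<le> u"
    and "sqrt 3 * semiperim a b c = 10 * r - r * u \<longleftrightarrow> 10 - s = u"
    by (auto simp: mult_le_cancel_left_pos)
  with main show ?thesis
    unfolding r_def s_def u_def isosceles_shape_def by simp
qed

end
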